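(* In the setting described in the context, \[ \mathbb{E}\bigg[\mathbf{1}\{\omega(n_{<x})=r\}\max_{y\in\mathcal{Y}}\Big(\frac{\tau(n_{<y})}{\operatorname{Log} y}\mathbf{1}\{\neg E_y\}\Big)\bigg]\ll \frac{1}{(\operatorname{Log}_2 x)^{9}}. \]
   Context: Notation: $\operatorname{Log} x\coloneqq\max\{1,\log x\}$, $\operatorname{Log}_2 x\coloneqq\operatorname{Log}(\operatorname{Log} x)$, $\operatorname{Log}_3 x\coloneqq\operatorname{Log}(\operatorname{Log}_2 x)$; $\omega(n)$ = number of distinct prime factors, $\tau(n)$ = number of divisors. Random model: for each prime $p$, $n_p$ equals $1$ with probability $\frac{p}{p+1}$ and $p$ with probability $\frac1{p+1}$, independently over $p$; $n_{<z}\coloneqq\prod_{p<z}n_p$. Setting: $\varepsilon>0$ is fixed, $x$ is sufficiently large in terms of $\varepsilon$, $r$ is an integer with $(1+\varepsilon)\operatorname{Log}_2 x\le r\le(2-\varepsilon)\operatorname{Log}_2 x$, and $\alpha$ is defined by $r=(1+\alpha)\operatorname{Log}_2 x$ (so $\varepsilon\le\alpha\le1-\varepsilon$). Let $\mathcal{Y}\coloneqq\{y>0: |\operatorname{Log}_2 y-\alpha\operatorname{Log}_2 x|\le\sqrt{\operatorname{Log}_2 x},\ \operatorname{Log}_2 y/\log 2\in\mathbb{Z}\}$. For $y\in\mathcal{Y}$, $E_y$ is the event $\log n_{<y}\le 10(\operatorname{Log}_3 x)\operatorname{Log} y$, and $\neg E_y$ its complement. Implied constants may depend on $\varepsilon$.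 *)

theory Defs
  imports "HOL-Probability.Probability" "HOL-Computational_Algebra.Primes"
begin

definition Log :: "real \<Rightarrow> real" where
  "Log x = max 1 (ln x)"

definition Log2 :: "real \<Rightarrow> real" where
  "Log2 x = Log (Log x)"

definition Log3 :: "real \<Rightarrow> real" where
  "Log3 x = Log (Log2 x)"

definition omega :: "nat \<Rightarrow> nat" where
  "omega n = card (prime_factors n)"

definition tau :: "nat \<Rightarrow> nat" where
  "tau n = card {d. d dvd n}"

definition np_pmf :: "nat \<Rightarrow> nat pmf" where
  "np_pmf p = map_pmf (\<lambda>b. if b then p else 1) (bernoulli_pmf (1 / (real p + 1)))"

definition rand_model :: "(nat \<Rightarrow> nat) measure" where
  "rand_model = (\<Pi>\<^sub>M p\<in>{p. prime p}. measure_pmf (np_pmf p))"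

definition n_below :: "(nat \<Rightarrow> nat) \<Rightarrow> real \<Rightarrow> nat" where
  "n_below w z = (\<Prod>p\<in>{p. prime p \<and> real p < z}. w p)"

definition Yset :: "real \<Rightarrow> real \<Rightarrow> real set" where
  "Yset x \<alpha> = {y. y > 0 \<and> \<bar>Log2 y - \<alpha> * Log2 x\<bar> \<le> sqrt (Log2 x)
                   \<and> Log2 y / ln 2 \<in> \<int>}"

definition E_event :: "real \<Rightarrow> real \<Rightarrow> (nat \<Rightarrow> nat) \<Rightarrow> bool" where
  "E_event x y w \<longleftrightarrow> ln (real (n_below w y)) \<le> 10 * Log3 x * Log y"

end

theory Submission
  imports Defs
begin

(* Rankin's trick. For y in the set Y, outside E_y we have n_{<y}^(1/ln y) >= (Log_2 x)^10, so the
   y-term of the maximum is at most tau(n_{<y}) n_{<y}^(1/ln y) / ((Log_2 x)^10 ln y).  The expectation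
   of tau(n_{<y}) n_{<y}^(1/ln y) factorises over the primes p < y into factors 1 + O(1/p + ln p/(p ln y)),
   whose product is O(ln y) by Mertens' theorems (derived here from Chebyshev's bound
   theta(n) <= 4 n ln 2).  Bounding the maximum by the sum over the O(sqrt (Log_2 x)) points of Y, and
   simply dropping the indicator of omega(n_{<x}) = r, gives O((Log_2 x)^-9). *)

section \<open>Chebyshev and Mertens bounds\<close>

lemma ln_of_nat_nonneg [simp]: "0 \<le> ln (real n)"
  by (cases "n = 0") auto

lemma sum_exponent_ln_le_ln:
  fixes m :: nat
  assumes "m > 0" "finite A" "A \<subseteq> {p. prime p}" "\<And>p. p \<in> A \<Longrightarrow> p ^ e p dvd m"
  shows "(\<Sum>p\<in>A. real (e p) * ln (real p)) \<le> ln (real m)"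
proof -
  let ?g = "\<lambda>p. real (multiplicity p m) * ln (real p)"
  have ln_m: "ln (real m) = (\<Sum>p\<in>prime_factors m. ?g p)"
  proof -
    have "real m = real (\<Prod>p\<in>prime_factors m. p ^ multiplicity p m)"
      using prime_factorization_nat[OF assms(1)] by simp
    also have "\<dots> = (\<Prod>p\<in>prime_factors m. real p ^ multiplicity p m)" by simp
    finally have "ln (real m) = (\<Sum>p\<in>prime_factors m. ln (real p ^ multiplicity p m))"
      by (simp add: ln_prod in_prime_factors_imp_prime prime_gt_0_nat)
    then show ?thesis
      by (simp add: ln_realpow in_prime_factors_imp_prime prime_gt_0_nat)
  qed
  have "(\<Sum>p\<in>A. real (e p) * ln (real p)) \<le> (\<Sum>p\<in>A. ?g p)"
  proof (rule sum_mono)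
    fix p assume p: "p \<in> A"
    then have "prime p" using assms(3) by auto
    moreover have "e p \<le> multiplicity p m"
      using assms(1) assms(4)[OF p] \<open>prime p\<close> by (intro multiplicity_geI) auto
    ultimately show "real (e p) * ln (real p) \<le> ?g p"
      by (intro mult_right_mono) auto
  qed
  also have "\<dots> = (\<Sum>p\<in>A \<inter> prime_factors m. ?g p)"
    using assms(1-3) by (intro sum.mono_neutral_right) (auto simp: prime_factors_multiplicity)
  also have "\<dots> \<le> (\<Sum>p\<in>prime_factors m. ?g p)"
    by (intro sum_mono2) auto
  finally show ?thesis using ln_m by simp
qed

definition primes_theta :: "nat \<Rightarrow> real" where
  "primes_theta n = (\<Sum>p | prime p \<and> p \<le> n. ln (real p))"

lemma primes_theta_mono: "m \<le> n \<Longrightarrow> primes_theta m \<le> primes_theta n"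
  unfolding primes_theta_def by (rule sum_mono2) auto

text \<open>The primes in \<open>(m, 2m]\<close> all divide \<open>2m choose m \<le> 4\<^sup>m\<close>.\<close>
lemma primes_theta_double: "primes_theta (2 * m) \<le> primes_theta m + 2 * ln 2 * real m"
proof -
  let ?A = "{p. prime p \<and> m < p \<and> p \<le> 2 * m}"
  have primes_split: "{p. prime p \<and> p \<le> 2 * m} = {p. prime p \<and> p \<le> m} \<union> ?A" by auto
  have split: "primes_theta (2 * m) = primes_theta m + (\<Sum>p\<in>?A. ln (real p))"
    unfolding primes_theta_def primes_split by (subst sum.union_disjoint) auto
  have "p dvd (2 * m choose m)" if "p \<in> ?A" for p
  proof -
    from that have p: "prime p" "m < p" "p \<le> 2 * m" by auto
    have "fact m * fact m * (2 * m choose m) = (fact (2 * m) :: nat)"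
      using binomial_fact_lemma[of m "2 * m"] by (simp add: mult_2)
    moreover have "p dvd fact (2 * m)" "\<not> p dvd fact m" using p prime_dvd_fact_iff by auto
    ultimately show ?thesis using p(1) by (metis prime_dvd_mult_iff)
  qed
  then have "(\<Sum>p\<in>?A. real 1 * ln (real p)) \<le> ln (real (2 * m choose m))"
    by (intro sum_exponent_ln_le_ln) auto
  also have "\<dots> \<le> ln (2 ^ (2 * m))"
    using binomial_le_pow2[of "2 * m" m] by (simp del: of_nat_power add: of_nat_power[symmetric])
  also have "\<dots> = 2 * ln 2 * real m" by (simp add: ln_realpow)
  finally show ?thesis using split by simp
qed

lemma primes_theta_le: "primes_theta n \<le> 4 * ln 2 * real n"
proof (induction n rule: less_induct)
  case (less n)
  show ?case
  proof (cases "n \<le> 2")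
    case True
    have "{p. prime p \<and> p \<le> n} \<subseteq> {2}" using True by (auto dest: prime_ge_2_nat)
    then have "{p. prime p \<and> p \<le> n} = (if n = 2 then {2} else {})" using True by auto
    then show ?thesis using True by (auto simp: primes_theta_def)
  next
    case False
    define m where "m = (n + 1) div 2"
    have "m < n" "n \<le> 2 * m" "2 * m \<le> n + 1" using False by (auto simp: m_def)
    have "primes_theta n \<le> primes_theta (2 * m)" using \<open>n \<le> 2 * m\<close> by (rule primes_theta_mono)
    also have "\<dots> \<le> 4 * ln 2 * real m + 2 * ln 2 * real m"
      using primes_theta_double[of m] less[OF \<open>m < n\<close>] by linarith
    also have "\<dots> = 6 * ln 2 * real m" by simp
    also have "\<dots> \<le> 4 * ln 2 * real n" using \<open>2 * m \<le> n + 1\<close> False by simp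
    finally show ?thesis .
  qed
qed

lemma pow_div_dvd_fact: "p ^ (n div p) dvd fact n" for p n :: nat
proof (induction n)
  case (Suc n)
  show ?case
  proof (cases "p dvd Suc n")
    case True
    then have "Suc n div p = Suc (n div p)" by (auto simp: div_Suc elim: dvdE)
    moreover have "p * p ^ (n div p) dvd Suc n * fact n" using True Suc.IH by (rule mult_dvd_mono)
    ultimately show ?thesis by (simp add: fact_Suc)
  next
    case False
    then have "Suc n div p = n div p" by (simp add: div_Suc dvd_eq_mod_eq_0)
    then show ?thesis using Suc.IH dvd_trans[OF _ fact_dvd[of n "Suc n"]] by simp
  qed
qed simp

lemma sum_primes_atMost_Suc:
  "(\<Sum>p | prime p \<and> p \<le> Suc n. f p) = (\<Sum>p | prime p \<and> p \<le> n. f p) + (if prime (Suc n) then f (Suc n) else 0)"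
proof -
  have "{p. prime p \<and> p \<le> Suc n} = {p. prime p \<and> p \<le> n} \<union> (if prime (Suc n) then {Suc n} else {})"
    by (auto simp: le_Suc_eq)
  then show ?thesis by (simp add: sum.union_disjoint)
qed

text \<open>Compare \<open>ln n! \<le> n ln n\<close> with the contribution \<open>\<Sum>\<^sub>p \<lfloor>n/p\<rfloor> ln p\<close> of the primes \<open>p \<le> n\<close> to it.\<close>
lemma mertens_first_upper:
  assumes "n \<ge> 1"
  shows "(\<Sum>p | prime p \<and> p \<le> n. ln (real p) / real p) \<le> ln (real n) + 4 * ln 2"
proof -
  let ?P = "{p. prime p \<and> p \<le> n}"
  have "(\<Sum>p\<in>?P. real (n div p) * ln (real p)) \<le> ln (real (fact n))"
    by (rule sum_exponent_ln_le_ln) (auto simp: pow_div_dvd_fact)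
  also have "\<dots> \<le> ln (real (n ^ n))"
    using fact_le_power[of n, where 'a=real] by (intro ln_mono) auto
  also have "\<dots> = real n * ln (real n)" by (simp add: ln_realpow)
  finally have upper: "(\<Sum>p\<in>?P. real (n div p) * ln (real p)) \<le> real n * ln (real n)" .
  have "(real n / real p - 1) * ln (real p) \<le> real (n div p) * ln (real p)" if "p \<in> ?P" for p
  proof -
    have "real p > 0" using that by (simp add: prime_gt_0_nat)
    moreover have "n < p + p * (n div p)"
      using \<open>real p > 0\<close> by (intro dividend_less_times_div) simp
    then have "real n < real p * (real (n div p) + 1)"
      by (simp add: algebra_simps flip: of_nat_mult of_nat_add)
    ultimately have "real n / real p - 1 \<le> real (n div p)" by (simp add: field_simps)
    then show ?thesis by (rule mult_right_mono) simp
  qed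
  then have "(\<Sum>p\<in>?P. (real n / real p - 1) * ln (real p)) \<le> (\<Sum>p\<in>?P. real (n div p) * ln (real p))"
    by (rule sum_mono)
  then have "(\<Sum>p\<in>?P. (real n / real p - 1) * ln (real p)) \<le> real n * ln (real n)"
    using upper by linarith
  moreover have "(\<Sum>p\<in>?P. (real n / real p - 1) * ln (real p))
      = real n * (\<Sum>p\<in>?P. ln (real p) / real p) - primes_theta n"
    by (simp add: primes_theta_def sum_subtractf sum_distrib_left left_diff_distrib)
  ultimately have "real n * (\<Sum>p\<in>?P. ln (real p) / real p) \<le> real n * (ln (real n) + 4 * ln 2)"
    using primes_theta_le[of n] by (simp add: algebra_simps)
  then show ?thesis using assms by simp
qed

text \<open>Partial summation of \<open>1/p = (ln p / p) / ln p\<close>, carried out as an induction on \<open>N\<close>.\<close>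
lemma mertens_second_partial_summation:
  assumes "N \<ge> 2"
  shows "(\<Sum>p | prime p \<and> p \<le> N. 1 / real p)
    \<le> (\<Sum>p | prime p \<and> p \<le> N. ln (real p) / real p) / ln (real N)
       + ln (ln (real N)) - ln (ln 2) + 4 * ln 2 * (1 / ln 2 - 1 / ln (real N))"
  using assms
proof (induction N rule: nat_induct_at_least)
  case base
  have "{p. prime p \<and> p \<le> 2} = {2::nat}" by (auto simp: le_Suc_eq dest: prime_ge_2_nat)
  then show ?case by simp
next
  case (Suc N)
  define S where "S = (\<Sum>p | prime p \<and> p \<le> N. ln (real p) / real p)"
  define L where "L = ln (real N)"
  define L' where "L' = ln (real (Suc N))"
  define a where "a = (if prime (Suc N) then ln (real (Suc N)) / real (Suc N) else 0)"
  have "0 < L" "L < L'" using Suc.hyps by (simp_all add: L_def L'_def)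
  have S': "(\<Sum>p | prime p \<and> p \<le> Suc N. ln (real p) / real p) = S + a"
    by (simp add: sum_primes_atMost_Suc S_def a_def)
  have H': "(\<Sum>p | prime p \<and> p \<le> Suc N. 1 / real p) = (\<Sum>p | prime p \<and> p \<le> N. 1 / real p) + a / L'"
    using \<open>0 < L\<close> \<open>L < L'\<close> by (simp add: sum_primes_atMost_Suc a_def L'_def)
  define d where "d = 1 / L - 1 / L'"
  have "d \<ge> 0" using \<open>0 < L\<close> \<open>L < L'\<close> by (simp add: d_def frac_le)
  have "L * d \<le> ln L' - ln L"
  proof -
    have "ln (L / L') \<le> L / L' - 1" using \<open>0 < L\<close> \<open>L < L'\<close> by (intro ln_le_minus_one) simp
    moreover have "ln (L / L') = ln L - ln L'" using \<open>0 < L\<close> \<open>L < L'\<close> by (simp add: ln_div)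
    moreover have "L * d = 1 - L / L'" using \<open>0 < L\<close> \<open>L < L'\<close> by (simp add: d_def field_simps)
    ultimately show ?thesis by linarith
  qed
  moreover have "S * d \<le> (L + 4 * ln 2) * d"
    using mertens_first_upper[of N] Suc.hyps \<open>d \<ge> 0\<close> by (intro mult_right_mono) (simp_all add: S_def L_def)
  ultimately have "S * d \<le> ln L' - ln L + 4 * ln 2 * d" by (simp add: algebra_simps)
  moreover have "S / L = S / L' + S * d" "(S + a) / L' = S / L' + a / L'"
    "1 / ln 2 - 1 / L' = (1 / ln 2 - 1 / L) + d"
    by (simp_all add: d_def algebra_simps add_divide_distrib)
  ultimately show ?case
    using Suc.IH H' S' unfolding S_def[symmetric] L_def[symmetric] L'_def[symmetric]
    by (simp only: distrib_left)
qed

lemma mertens_second_upper: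
  assumes "N \<ge> 2"
  shows "(\<Sum>p | prime p \<and> p \<le> N. 1 / real p) \<le> ln (ln (real N)) + 9 - ln (ln 2)"
proof -
  have "ln 2 \<le> ln (real N)" using assms by simp
  then have "(\<Sum>p | prime p \<and> p \<le> N. ln (real p) / real p) \<le> 5 * ln (real N)"
    using mertens_first_upper[of N] assms by linarith
  then have "(\<Sum>p | prime p \<and> p \<le> N. ln (real p) / real p) / ln (real N) \<le> 5"
    using assms by (subst pos_divide_le_eq) (simp_all add: mult.commute)
  moreover have "4 * ln 2 * (1 / ln 2 - 1 / ln (real N)) \<le> 4"
    using \<open>ln 2 \<le> ln (real N)\<close> by (simp add: right_diff_distrib)
  ultimately show ?thesis using mertens_second_partial_summation[OF assms] by simp
qed

definition primes_below :: "real \<Rightarrow> nat set" where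
  "primes_below y = {p. prime p \<and> real p < y}"

lemma primes_below_subset_atMost:
  "primes_below y \<subseteq> {p. prime p \<and> p \<le> nat \<lfloor>y\<rfloor>}"
  by (auto simp: primes_below_def le_nat_iff le_floor_iff)

lemma finite_primes_below [simp]: "finite (primes_below y)"
  by (rule finite_subset[OF primes_below_subset_atMost]) simp

lemma sum_primes_below_le_sum_primes_atMost:
  fixes f :: "nat \<Rightarrow> real"
  assumes "\<And>p. f p \<ge> 0"
  shows "(\<Sum>p\<in>primes_below y. f p) \<le> (\<Sum>p | prime p \<and> p \<le> nat \<lfloor>y\<rfloor>. f p)"
  using primes_below_subset_atMost assms by (intro sum_mono2) auto

lemma mertens_first_primes_below:
  assumes "y \<ge> 2"
  shows "(\<Sum>p\<in>primes_below y. ln (real p) / real p) \<le> ln y + 4 * ln 2"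
proof -
  have "nat \<lfloor>y\<rfloor> \<ge> 1" "real (nat \<lfloor>y\<rfloor>) \<le> y" using assms by (simp_all add: le_nat_iff le_floor_iff)
  then have "ln (real (nat \<lfloor>y\<rfloor>)) \<le> ln y" by simp
  then show ?thesis
    using sum_primes_below_le_sum_primes_atMost[of "\<lambda>p. ln (real p) / real p" y]
      mertens_first_upper[OF \<open>nat \<lfloor>y\<rfloor> \<ge> 1\<close>] by simp
qed

lemma mertens_second_primes_below:
  assumes "y \<ge> 2"
  shows "(\<Sum>p\<in>primes_below y. 1 / real p) \<le> ln (ln y) + 9 - ln (ln 2)"
proof -
  have "nat \<lfloor>y\<rfloor> \<ge> 2" "real (nat \<lfloor>y\<rfloor>) \<le> y" using assms by (simp_all add: le_nat_iff le_floor_iff)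
  then have "ln (ln (real (nat \<lfloor>y\<rfloor>))) \<le> ln (ln y)" by simp
  then show ?thesis
    using sum_primes_below_le_sum_primes_atMost[of "\<lambda>p. 1 / real p" y]
      mertens_second_upper[OF \<open>nat \<lfloor>y\<rfloor> \<ge> 2\<close>] by simp
qed

section \<open>The random model\<close>

lemma (in product_prob_space) nn_integral_prod_components:
  assumes "finite J" "J \<subseteq> I" "\<And>i. i \<in> J \<Longrightarrow> f i \<in> borel_measurable (M i)"
  shows "(\<integral>\<^sup>+\<omega>. (\<Prod>i\<in>J. f i (\<omega> i)) \<partial>PiM I M) = (\<Prod>i\<in>J. \<integral>\<^sup>+x. f i x \<partial>M i)"
proof -
  let ?F = "\<lambda>\<omega>. \<Prod>i\<in>J. f i (\<omega> i)"
  have [measurable]: "?F \<in> borel_measurable (PiM J M)"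
    using assms(3) by measurable
  have "(\<integral>\<^sup>+\<omega>. ?F \<omega> \<partial>PiM I M) = (\<integral>\<^sup>+\<omega>. ?F (restrict \<omega> J) \<partial>PiM I M)"
    by (intro nn_integral_cong prod.cong) auto
  also have "\<dots> = (\<integral>\<^sup>+\<omega>. ?F \<omega> \<partial>distr (PiM I M) (PiM J M) (\<lambda>\<omega>. restrict \<omega> J))"
    by (rule nn_integral_distr[symmetric, OF measurable_restrict_subset[OF assms(2)]]) simp
  also have "\<dots> = (\<integral>\<^sup>+\<omega>. ?F \<omega> \<partial>PiM J M)"
    by (simp add: distr_PiM_restrict_finite assms(1,2))
  also have "\<dots> = (\<Prod>i\<in>J. \<integral>\<^sup>+x. f i x \<partial>M i)"
    using assms by (intro product_nn_integral_prod) auto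
  finally show ?thesis .
qed

lemma product_prob_space_np_pmf: "product_prob_space (\<lambda>p. measure_pmf (np_pmf p))"
  by (simp add: product_prob_space_def product_sigma_finite_def product_prob_space_axioms_def
      prob_space_measure_pmf prob_space_imp_sigma_finite)

lemma nn_integral_np_pmf:
  assumes "\<And>v. g v \<ge> 0"
  shows "(\<integral>\<^sup>+v. ennreal (g v) \<partial>np_pmf p) = ennreal ((g p + real p * g 1) / (real p + 1))"
proof -
  have "1 - 1 / (real p + 1) = real p / (real p + 1)" by (simp add: field_simps)
  then have "(\<integral>\<^sup>+v. ennreal (g v) \<partial>np_pmf p)
      = ennreal (g p) * ennreal (1 / (real p + 1)) + ennreal (g 1) * ennreal (real p / (real p + 1))"
    by (simp add: np_pmf_def)
  also have "\<dots> = ennreal ((g p + real p * g 1) / (real p + 1))"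
    using assms[of p] assms[of 1]
    by (simp add: add_divide_distrib ennreal_mult[symmetric] ennreal_plus[symmetric] del: ennreal_plus)
  finally show ?thesis .
qed

lemma AE_rand_model_values: "AE w in rand_model. \<forall>p. prime p \<longrightarrow> w p = 1 \<or> w p = p"
proof -
  interpret product_prob_space "\<lambda>p. measure_pmf (np_pmf p)" "{p. prime p}"
    by (rule product_prob_space_np_pmf)
  have "AE w in rand_model. \<forall>p\<in>{p. prime p}. w p = 1 \<or> w p = p"
    unfolding rand_model_def
    by (subst AE_ball_countable) (auto intro!: AE_component simp: AE_measure_pmf_iff np_pmf_def)
  then show ?thesis by simp
qed

lemma n_below_eq: "n_below w y = (\<Prod>p\<in>primes_below y. w p)"
  by (simp add: n_below_def primes_below_def)

lemma borel_measurable_rand_model_prod: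
  "(\<lambda>w. \<Prod>p\<in>primes_below y. f p (w p) :: real) \<in> borel_measurable rand_model"
  unfolding rand_model_def
  by (intro borel_measurable_prod measurable_compose[OF measurable_component_singleton])
     (auto simp: primes_below_def)

section \<open>Rankin's trick\<close>

text \<open>For \<open>v \<in> {1, p}\<close> this is the \<open>p\<close>-part of \<open>\<tau>(n) n\<^sup>s\<close>.\<close>
definition rankin_factor :: "real \<Rightarrow> nat \<Rightarrow> nat \<Rightarrow> real" where
  "rankin_factor s p v = (if v = p then 2 * real p powr s else 1)"

lemma rankin_factor_nonneg [simp]: "rankin_factor s p v \<ge> 0"
  by (simp add: rankin_factor_def)

lemma tau_prime_mult_le:
  assumes "prime p" "m > 0"
  shows "tau (p * m) \<le> 2 * tau m"
proof -
  have "{d. d dvd p * m} \<subseteq> {d. d dvd m} \<union> (\<lambda>d. p * d) ` {d. d dvd m}"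
  proof
    fix d assume "d \<in> {d. d dvd p * m}"
    then have d: "d dvd p * m" by simp
    show "d \<in> {d. d dvd m} \<union> (\<lambda>d. p * d) ` {d. d dvd m}"
    proof (cases "p dvd d")
      case True
      then obtain e where "d = p * e" by (auto elim: dvdE)
      then show ?thesis using d assms(1) by (auto simp: prime_gt_0_nat)
    next
      case False
      then have "coprime d p" using prime_imp_coprime[OF assms(1) False] by (simp add: coprime_commute)
      then show ?thesis using d coprime_dvd_mult_right_iff by auto
    qed
  qed
  moreover have "finite {d. d dvd m}" using assms(2) by simp
  ultimately have "tau (p * m) \<le> card ({d. d dvd m} \<union> (\<lambda>d. p * d) ` {d. d dvd m})"
    unfolding tau_def by (intro card_mono) auto
  also have "\<dots> \<le> card {d. d dvd m} + card ((\<lambda>d. p * d) ` {d. d dvd m})"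
    by (rule card_Un_le)
  also have "\<dots> \<le> 2 * tau m"
    using card_image_le[OF \<open>finite {d. d dvd m}\<close>, of "\<lambda>d. p * d"] by (simp add: tau_def)
  finally show ?thesis .
qed

lemma tau_prod_le:
  assumes "finite J" "\<forall>p\<in>J. prime p \<and> (w p = 1 \<or> w p = p)"
  shows "real (tau (\<Prod>p\<in>J. w p)) \<le> (\<Prod>p\<in>J. if w p = p then 2 else 1)"
  using assms
proof (induction J rule: finite_induct)
  case empty
  then show ?case by (simp add: tau_def)
next
  case (insert q J)
  have "(\<Prod>p\<in>J. w p) > 0"
    using insert.prems by (intro prod_pos) (auto simp: prime_gt_0_nat)
  then have "tau (q * (\<Prod>p\<in>J. w p)) \<le> 2 * tau (\<Prod>p\<in>J. w p)"
    using insert.prems by (intro tau_prime_mult_le) auto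
  then show ?case
    using insert by (cases "w q = q") (auto simp: prime_gt_1_nat[THEN less_imp_neq, symmetric])
qed

lemma tau_mult_powr_le_rankin_product:
  assumes "\<forall>p. prime p \<longrightarrow> w p = 1 \<or> w p = p"
  shows "real (tau (n_below w y)) * real (n_below w y) powr s
           \<le> (\<Prod>p\<in>primes_below y. rankin_factor s p (w p))"
proof -
  have "real (tau (n_below w y)) \<le> (\<Prod>p\<in>primes_below y. if w p = p then 2 else 1)"
    unfolding n_below_eq using assms by (intro tau_prod_le finite_primes_below) (auto simp: primes_below_def)
  moreover have "real (n_below w y) powr s = (\<Prod>p\<in>primes_below y. real (w p) powr s)"
    by (simp add: n_below_eq prod_powr_distrib)
  ultimately have "real (tau (n_below w y)) * real (n_below w y) powr s
      \<le> (\<Prod>p\<in>primes_below y. if w p = p then 2 else 1) * (\<Prod>p\<in>primes_below y. real (w p) powr s)"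
    by (auto intro!: mult_right_mono prod_nonneg)
  also have "\<dots> = (\<Prod>p\<in>primes_below y. rankin_factor s p (w p))"
    unfolding prod.distrib[symmetric] using assms
    by (intro prod.cong refl) (auto simp: rankin_factor_def primes_below_def prime_gt_1_nat[THEN less_imp_neq])
  finally show ?thesis .
qed

lemma nn_integral_rankin_product:
  "(\<integral>\<^sup>+w. ennreal (\<Prod>p\<in>primes_below y. rankin_factor s p (w p)) \<partial>rand_model)
     = ennreal (\<Prod>p\<in>primes_below y. (2 * real p powr s + real p) / (real p + 1))"
proof -
  interpret product_prob_space "\<lambda>p. measure_pmf (np_pmf p)" "{p. prime p}"
    by (rule product_prob_space_np_pmf)
  have "(\<integral>\<^sup>+w. ennreal (\<Prod>p\<in>primes_below y. rankin_factor s p (w p)) \<partial>rand_model)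
      = (\<integral>\<^sup>+w. (\<Prod>p\<in>primes_below y. ennreal (rankin_factor s p (w p))) \<partial>rand_model)"
    by (simp add: prod_ennreal)
  also have "\<dots> = (\<Prod>p\<in>primes_below y. \<integral>\<^sup>+v. ennreal (rankin_factor s p v) \<partial>np_pmf p)"
    unfolding rand_model_def
    by (intro nn_integral_prod_components finite_primes_below) (auto simp: primes_below_def)
  also have "\<dots> = (\<Prod>p\<in>primes_below y. ennreal ((2 * real p powr s + real p) / (real p + 1)))"
    by (intro prod.cong refl) (auto simp: nn_integral_np_pmf rankin_factor_def primes_below_def)
  also have "\<dots> = ennreal (\<Prod>p\<in>primes_below y. (2 * real p powr s + real p) / (real p + 1))"
    by (simp add: prod_ennreal)
  finally show ?thesis .
qed

lemma exp_le_1_plus_e_times: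
  fixes t :: real
  assumes "0 \<le> t" "t \<le> 1"
  shows "exp t \<le> 1 + exp 1 * t"
proof -
  have "(1 - t) * exp t \<le> exp (-t) * exp t"
    using exp_ge_add_one_self[of "-t"] by (intro mult_right_mono) auto
  then have "exp t \<le> 1 + t * exp t" by (simp add: algebra_simps exp_minus_inverse)
  also have "t * exp t \<le> t * exp 1" using assms by (intro mult_left_mono) auto
  finally show ?thesis by (simp add: mult.commute)
qed

lemma ln_ge_1: "exp 1 \<le> y \<Longrightarrow> 1 \<le> ln y" for y :: real
  using exp_gt_zero[of 1] ln_ge_iff[of y 1] by linarith

lemma rankin_local_factor_le:
  assumes "prime p" "real p < y" "ln y > 0"
  shows "(2 * real p powr (1 / ln y) + real p) / (real p + 1)
           \<le> exp (1 / real p + 2 * exp 1 * (ln (real p) / real p) / ln y)"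
proof -
  have "real p \<ge> 2" using prime_ge_2_nat[OF assms(1)] by simp
  define t where "t = ln (real p) / ln y"
  have "0 \<le> t" "t \<le> 1" using assms \<open>real p \<ge> 2\<close> by (simp_all add: t_def)
  define u where "u = real p powr (1 / ln y)"
  have "u = exp t" using \<open>real p \<ge> 2\<close> by (simp add: u_def t_def powr_def)
  then have "1 \<le> u" "u \<le> 1 + exp 1 * t" using \<open>0 \<le> t\<close> exp_le_1_plus_e_times[OF \<open>0 \<le> t\<close> \<open>t \<le> 1\<close>] by simp_all
  have "(2 * u + real p) / (real p + 1) = 1 + (2 * u - 1) / (real p + 1)"
    using \<open>real p \<ge> 2\<close> by (simp add: field_simps)
  also have "\<dots> \<le> 1 + (2 * u - 1) / real p"
    using \<open>1 \<le> u\<close> \<open>real p \<ge> 2\<close> by (intro add_left_mono divide_left_mono) auto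
  also have "\<dots> \<le> 1 + (1 + 2 * exp 1 * t) / real p"
    using \<open>u \<le> 1 + exp 1 * t\<close> \<open>real p \<ge> 2\<close> by (intro add_left_mono divide_right_mono) auto
  also have "\<dots> \<le> exp ((1 + 2 * exp 1 * t) / real p)" by (rule exp_ge_add_one_self)
  also have "(1 + 2 * exp 1 * t) / real p = 1 / real p + 2 * exp 1 * (ln (real p) / real p) / ln y"
    by (simp add: t_def add_divide_distrib)
  finally show ?thesis by (simp add: u_def)
qed

definition rankin_const :: real where
  "rankin_const = exp (9 - ln (ln 2) + 2 * exp 1 * (1 + 4 * ln 2))"

lemma rankin_const_pos: "rankin_const > 0"
  by (simp add: rankin_const_def)

text \<open>Rankin's trick at \<open>s = 1 / ln y\<close>: the local factors are \<open>exp (1/p + O(ln p / (p ln y)))\<close>,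
  so by Mertens' theorems their product is \<open>O(ln y)\<close>.\<close>
lemma rankin_product_le:
  assumes "y \<ge> exp 1"
  shows "(\<Prod>p\<in>primes_below y. (2 * real p powr (1 / ln y) + real p) / (real p + 1))
           \<le> rankin_const * ln y"
proof -
  have "ln y \<ge> 1" using assms by (rule ln_ge_1)
  have "y \<ge> 2" using assms exp_ge_add_one_self[of 1] by linarith
  define b where "b p = 1 / real p + 2 * exp 1 * (ln (real p) / real p) / ln y" for p
  have "(\<Prod>p\<in>primes_below y. (2 * real p powr (1 / ln y) + real p) / (real p + 1))
         \<le> (\<Prod>p\<in>primes_below y. exp (b p))"
    using rankin_local_factor_le[of _ y] \<open>y \<ge> 2\<close>
    by (intro prod_mono) (auto simp: b_def primes_below_def intro!: divide_nonneg_pos add_nonneg_nonneg)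
  also have "\<dots> = exp (\<Sum>p\<in>primes_below y. b p)" by (simp add: exp_sum)
  also have "(\<Sum>p\<in>primes_below y. b p)
      = (\<Sum>p\<in>primes_below y. 1 / real p) + 2 * exp 1 / ln y * (\<Sum>p\<in>primes_below y. ln (real p) / real p)"
    by (simp add: b_def sum.distrib sum_distrib_left sum_divide_distrib mult_ac)
  also have "\<dots> \<le> (ln (ln y) + 9 - ln (ln 2)) + 2 * exp 1 / ln y * (ln y + 4 * ln 2)"
    using mertens_second_primes_below[OF \<open>y \<ge> 2\<close>] mertens_first_primes_below[OF \<open>y \<ge> 2\<close>] \<open>ln y \<ge> 1\<close>
    by (intro add_mono mult_left_mono) auto
  also have "2 * exp 1 / ln y * (ln y + 4 * ln 2) \<le> 2 * exp 1 * (1 + 4 * ln 2)"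
    using \<open>ln y \<ge> 1\<close> by (simp add: field_simps)
  finally have "(\<Prod>p\<in>primes_below y. (2 * real p powr (1 / ln y) + real p) / (real p + 1))
      \<le> exp (ln (ln y) + (9 - ln (ln 2) + 2 * exp 1 * (1 + 4 * ln 2)))"
    by (simp add: algebra_simps)
  then show ?thesis
    using \<open>ln y \<ge> 1\<close> by (simp only: rankin_const_def exp_add mult.commute) simp
qed

lemma nn_integral_rankin_weight_le:
  assumes "y \<ge> exp 1" "c > 0"
  shows "(\<integral>\<^sup>+w. ennreal ((\<Prod>p\<in>primes_below y. rankin_factor (1 / ln y) p (w p)) / (c * ln y))
           \<partial>rand_model) \<le> ennreal (rankin_const / c)"
proof -
  have "ln y \<ge> 1" using assms(1) by (rule ln_ge_1)
  then have "c * ln y > 0" using assms(2) by simp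
  have "(\<integral>\<^sup>+w. ennreal ((\<Prod>p\<in>primes_below y. rankin_factor (1 / ln y) p (w p)) / (c * ln y)) \<partial>rand_model)
      = (\<integral>\<^sup>+w. ennreal (\<Prod>p\<in>primes_below y. rankin_factor (1 / ln y) p (w p)) / ennreal (c * ln y)
          \<partial>rand_model)"
    using \<open>c * ln y > 0\<close> by (simp add: divide_ennreal prod_nonneg)
  also have "\<dots> = ennreal (\<Prod>p\<in>primes_below y. (2 * real p powr (1 / ln y) + real p) / (real p + 1))
      / ennreal (c * ln y)"
    using measurable_compose[OF borel_measurable_rand_model_prod measurable_ennreal]
    by (simp add: nn_integral_divide nn_integral_rankin_product)
  also have "\<dots> \<le> ennreal (rankin_const * ln y) / ennreal (c * ln y)"
    using rankin_product_le[OF assms(1)] by (intro divide_right_mono_ennreal ennreal_leI)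
  also have "\<dots> = ennreal (rankin_const / c)"
    using \<open>c * ln y > 0\<close> \<open>ln y \<ge> 1\<close> rankin_const_pos by (simp add: divide_ennreal)
  finally show ?thesis .
qed

section \<open>The expectation over the scales in \<open>\<Y>\<close>\<close>

lemma Log_ge_1 [simp]: "1 \<le> Log x"
  by (simp add: Log_def)

lemma Log_pos: "0 < Log x"
  using Log_ge_1[of x] by linarith

lemma Log2_ge_1 [simp]: "1 \<le> Log2 x"
  by (simp add: Log2_def)

lemma Log2_pos: "0 < Log2 x"
  using Log2_ge_1[of x] by linarith

text \<open>Outside \<open>E\<^sub>y\<close>: \<open>ln n > 10 Log\<^sub>3 x Log y \<ge> 10 ln (Log\<^sub>2 x) ln y\<close>.\<close>
lemma Log2_pow_le_powr_if_not_E_event: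
  assumes "\<not> E_event x y w" "y > 1"
  shows "Log2 x ^ 10 \<le> real (n_below w y) powr (1 / ln y)"
proof -
  let ?n = "real (n_below w y)"
  have "ln y > 0" using assms(2) by simp
  have "Log3 x \<ge> ln (Log2 x)" by (simp add: Log3_def Log_def)
  moreover have "Log y \<ge> ln y" by (simp add: Log_def)
  moreover have "Log3 x \<ge> 0" by (simp add: Log3_def Log_def)
  ultimately have "10 * ln (Log2 x) * ln y \<le> 10 * Log3 x * Log y"
    using \<open>ln y > 0\<close> by (intro mult_mono) auto
  also have "\<dots> < ln ?n" using assms(1) by (simp add: E_event_def)
  finally have less: "10 * ln (Log2 x) * ln y < ln ?n" .
  then have "10 * ln (Log2 x) < ln ?n / ln y" using \<open>ln y > 0\<close> by (simp add: field_simps)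
  moreover have "0 \<le> 10 * ln (Log2 x) * ln y" using \<open>ln y > 0\<close> by simp
  then have "?n > 0" using less by (cases "?n = 0") auto
  ultimately have "exp (10 * ln (Log2 x)) \<le> ?n powr (1 / ln y)" by (simp add: powr_def)
  moreover have "exp (10 * ln (Log2 x)) = Log2 x ^ 10"
    using exp_of_nat_mult[of 10 "ln (Log2 x)"] Log2_pos[of x] by simp
  ultimately show ?thesis by simp
qed

lemma integrand_le_rankin_weight:
  assumes "\<forall>p. prime p \<longrightarrow> w p = 1 \<or> w p = p" "y \<ge> exp 1"
  shows "real (tau (n_below w y)) / Log y * (if \<not> E_event x y w then 1 else 0)
           \<le> (\<Prod>p\<in>primes_below y. rankin_factor (1 / ln y) p (w p)) / (Log2 x ^ 10 * ln y)"
proof (cases "E_event x y w")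
  case False
  have "ln y \<ge> 1" using assms(2) by (rule ln_ge_1)
  then have "Log y = ln y" by (simp add: Log_def)
  have "y > 1" using assms(2) exp_gt_one[of 1] by linarith
  have "0 < Log2 x ^ 10" using Log2_pos[of x] by simp
  have "1 \<le> real (n_below w y) powr (1 / ln y) / Log2 x ^ 10"
    using Log2_pow_le_powr_if_not_E_event[OF False \<open>y > 1\<close>] \<open>0 < Log2 x ^ 10\<close> by simp
  then have "real (tau (n_below w y)) * 1
      \<le> real (tau (n_below w y)) * (real (n_below w y) powr (1 / ln y) / Log2 x ^ 10)"
    by (rule mult_left_mono) simp
  then have "real (tau (n_below w y)) / ln y
      \<le> real (tau (n_below w y)) * (real (n_below w y) powr (1 / ln y) / Log2 x ^ 10) / ln y"
    using \<open>ln y \<ge> 1\<close> by (intro divide_right_mono) simp_all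
  also have "\<dots> \<le> (\<Prod>p\<in>primes_below y. rankin_factor (1 / ln y) p (w p)) / (Log2 x ^ 10 * ln y)"
    using tau_mult_powr_le_rankin_product[OF assms(1), of y "1 / ln y"] \<open>0 < Log2 x ^ 10\<close> \<open>ln y \<ge> 1\<close>
    by (simp add: field_simps)
  finally show ?thesis using False \<open>Log y = ln y\<close> by simp
qed (use ln_ge_1[OF assms(2)] Log2_pos[of x] in \<open>simp add: prod_nonneg\<close>)

lemma Log2_gt_1D:
  assumes "1 < Log2 y"
  shows "exp 1 < ln y" "Log2 y = ln (ln y)"
proof -
  have "1 < ln (Log y)" using assms by (simp add: Log2_def Log_def)
  then have "exp 1 < exp (ln (Log y))" by simp
  then have "exp 1 < Log y" using Log_ge_1[of y] by (simp add: less_le_trans[OF zero_less_one])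
  then show "exp 1 < ln y" using exp_gt_one[of 1] by (auto simp: Log_def max_def split: if_splits)
  then have "1 < ln y" using exp_gt_one[of 1] by linarith
  then have "Log y = ln y" by (simp add: Log_def)
  then show "Log2 y = ln (ln y)" using \<open>1 < ln (Log y)\<close> by (simp add: Log2_def Log_def)
qed

lemma Yset_Log2_gt_1:
  "1 < \<alpha> * Log2 x - sqrt (Log2 x) \<Longrightarrow> y \<in> Yset x \<alpha> \<Longrightarrow> 1 < Log2 y"
  by (auto simp: Yset_def abs_le_iff)

lemma Yset_ge_exp_1:
  assumes "1 < \<alpha> * Log2 x - sqrt (Log2 x)" "y \<in> Yset x \<alpha>"
  shows "exp 1 \<le> y"
proof -
  have "exp 1 < ln y" using Log2_gt_1D(1)[OF Yset_Log2_gt_1[OF assms]] .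
  then have "1 < ln y" using one_less_exp_iff[of 1] by linarith
  moreover have "0 < y" using assms(2) by (simp add: Yset_def)
  ultimately show ?thesis by (simp add: ln_ge_iff[symmetric])
qed

lemma card_Icc_ceiling_floor_le:
  fixes a b :: real
  assumes "a \<le> b"
  shows "real (card {\<lceil>a\<rceil>..\<lfloor>b\<rfloor>}) \<le> b - a + 1"
proof (cases "\<lceil>a\<rceil> \<le> \<lfloor>b\<rfloor>")
  case True
  then have "real (card {\<lceil>a\<rceil>..\<lfloor>b\<rfloor>}) = of_int (\<lfloor>b\<rfloor> - \<lceil>a\<rceil> + 1)" by simp
  then show ?thesis using of_int_floor_le[of b] le_of_int_ceiling[of a] by linarith
next
  case False
  then show ?thesis using assms by simp
qed

text \<open>The points of \<open>\<Y>\<close> are separated by the values \<open>Log\<^sub>2 y / ln 2\<close>, which are integers in an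
  interval of length \<open>2 \<surd>(Log\<^sub>2 x) / ln 2\<close>.\<close>
lemma finite_card_Yset:
  assumes "1 < \<alpha> * Log2 x - sqrt (Log2 x)"
  shows "finite (Yset x \<alpha>) \<and> real (card (Yset x \<alpha>)) \<le> 2 * sqrt (Log2 x) / ln 2 + 1"
proof -
  define Y where "Y = Yset x \<alpha>"
  define a where "a = (\<alpha> * Log2 x - sqrt (Log2 x)) / ln 2"
  define b where "b = (\<alpha> * Log2 x + sqrt (Log2 x)) / ln 2"
  define k where "k y = \<lfloor>Log2 y / ln 2\<rfloor>" for y
  have k: "real_of_int (k y) = ln (ln y) / ln 2" "a \<le> k y" "k y \<le> b" if "y \<in> Y" for y
  proof -
    have "Log2 y = ln (ln y)" using Log2_gt_1D Yset_Log2_gt_1[OF assms] that by (simp add: Y_def)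
    moreover have "Log2 y / ln 2 \<in> \<int>" using that by (simp add: Y_def Yset_def)
    ultimately show "real_of_int (k y) = ln (ln y) / ln 2" by (auto simp: k_def elim!: Ints_cases)
    show "a \<le> k y" "k y \<le> b"
      using that \<open>real_of_int (k y) = ln (ln y) / ln 2\<close> \<open>Log2 y = ln (ln y)\<close>
      by (auto simp: Y_def Yset_def a_def b_def abs_le_iff divide_right_mono)
  qed
  have "inj_on k Y"
  proof (rule inj_onI)
    fix y1 y2 assume "y1 \<in> Y" "y2 \<in> Y" "k y1 = k y2"
    then have "ln (ln y1) / ln 2 = ln (ln y2) / ln 2" using k(1) by metis
    then have "ln (ln y1) = ln (ln y2)" by simp
    moreover have "exp 1 < ln y1" "exp 1 < ln y2"
      using \<open>y1 \<in> Y\<close> \<open>y2 \<in> Y\<close> Log2_gt_1D(1)[OF Yset_Log2_gt_1[OF assms]] by (auto simp: Y_def)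
    then have "0 < ln y1" "0 < ln y2" using exp_gt_zero[of 1] by linarith+
    moreover have "0 < y1" "0 < y2" using \<open>y1 \<in> Y\<close> \<open>y2 \<in> Y\<close> by (auto simp: Y_def Yset_def)
    ultimately show "y1 = y2" by simp
  qed
  moreover have "k ` Y \<subseteq> {\<lceil>a\<rceil>..\<lfloor>b\<rfloor>}"
    using k(2,3) by (auto simp: ceiling_le_iff le_floor_iff)
  ultimately have "finite Y" and card_Y: "card Y \<le> card {\<lceil>a\<rceil>..\<lfloor>b\<rfloor>}"
    using finite_subset[of "k ` Y"] card_mono[OF finite_atLeastAtMost_int, of "k ` Y"]
    by (simp_all add: finite_image_iff card_image del: card_atLeastAtMost_int)
  have "b - a = 2 * sqrt (Log2 x) / ln 2" by (simp add: a_def b_def field_simps)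
  moreover have "0 \<le> 2 * sqrt (Log2 x) / ln 2" using Log2_pos[of x] by simp
  ultimately have "real (card {\<lceil>a\<rceil>..\<lfloor>b\<rfloor>}) \<le> 2 * sqrt (Log2 x) / ln 2 + 1"
    using card_Icc_ceiling_floor_le[of a b] by simp
  then show ?thesis using \<open>finite Y\<close> card_Y unfolding Y_def by linarith
qed

lemma card_Yset_le_Log2:
  assumes "1 < \<alpha> * Log2 x - sqrt (Log2 x)"
  shows "real (card (Yset x \<alpha>)) \<le> (2 / ln 2 + 1) * Log2 x"
proof -
  have "Log2 x * 1 \<le> Log2 x * Log2 x" using Log2_pos[of x] by (intro mult_left_mono) simp_all
  then have "Log2 x \<le> (Log2 x)\<^sup>2" by (simp add: power2_eq_square)
  then have "sqrt (Log2 x) \<le> Log2 x" using real_sqrt_le_mono[of "Log2 x" "(Log2 x)\<^sup>2"] Log2_pos[of x] by simp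
  then have "2 * sqrt (Log2 x) / ln 2 \<le> 2 * Log2 x / ln 2" by (simp add: divide_right_mono)
  moreover have "(2 / ln 2 + 1) * Log2 x = 2 * Log2 x / ln 2 + Log2 x" by (simp add: algebra_simps)
  ultimately show ?thesis using finite_card_Yset[OF assms] Log2_ge_1[of x] by linarith
qed

lemma Yset_nonempty:
  assumes "1 < \<alpha> * Log2 x - sqrt (Log2 x)"
  shows "Yset x \<alpha> \<noteq> {}"
proof -
  define z where "z = \<alpha> * Log2 x / ln 2"
  define t where "t = real_of_int \<lfloor>z\<rfloor> * ln 2"
  have "t \<le> z * ln 2" unfolding t_def by (rule mult_right_mono) auto
  moreover have "(z - 1) * ln 2 < t"
    unfolding t_def using real_of_int_floor_gt_diff_one[of z] by (intro mult_strict_right_mono) auto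
  moreover have "z * ln 2 = \<alpha> * Log2 x" by (simp add: z_def)
  ultimately have "t \<le> \<alpha> * Log2 x" "\<alpha> * Log2 x - ln 2 < t" by (simp_all add: left_diff_distrib)
  moreover have "ln 2 \<le> (1::real)" "1 \<le> sqrt (Log2 x)" using ln_2_less_1 by simp_all
  ultimately have "1 \<le> t" "\<bar>t - \<alpha> * Log2 x\<bar> \<le> sqrt (Log2 x)" using assms by linarith+
  then have "Log2 (exp (exp t)) = t" by (simp add: Log2_def Log_def)
  then have "exp (exp t) \<in> Yset x \<alpha>"
    using \<open>\<bar>t - \<alpha> * Log2 x\<bar> \<le> sqrt (Log2 x)\<close> by (simp add: Yset_def t_def)
  then show ?thesis by blast
qed

lemma Max_image_le_sum:
  fixes f g :: "'a \<Rightarrow> 'b :: linordered_semidom"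
  assumes "finite A" "A \<noteq> {}" "\<And>a. a \<in> A \<Longrightarrow> f a \<le> g a" "\<And>a. a \<in> A \<Longrightarrow> 0 \<le> g a"
  shows "Max (f ` A) \<le> sum g A"
proof -
  have "Max (f ` A) \<in> f ` A" using assms(1,2) by (intro Max_in) auto
  then obtain a where "a \<in> A" "Max (f ` A) = f a" by blast
  moreover have "g a \<le> sum g A"
    using \<open>a \<in> A\<close> assms(1,4) by (intro member_le_sum) auto
  ultimately show ?thesis using order_trans[OF assms(3)] by simp
qed

lemma Max_integrand_le_sum_rankin_weights:
  assumes "1 < \<alpha> * Log2 x - sqrt (Log2 x)" "\<forall>p. prime p \<longrightarrow> w p = 1 \<or> w p = p"
  shows "(if omega (n_below w x) = r then 1 else 0) *
           Max ((\<lambda>y. real (tau (n_below w y)) / Log y * (if \<not> E_event x y w then 1 else 0)) ` Yset x \<alpha>)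
         \<le> (\<Sum>y\<in>Yset x \<alpha>. (\<Prod>p\<in>primes_below y. rankin_factor (1 / ln y) p (w p)) / (Log2 x ^ 10 * ln y))"
    (is "?I * Max (?h ` ?Y) \<le> (\<Sum>y\<in>?Y. ?G y)")
proof -
  have "finite ?Y" "?Y \<noteq> {}" using finite_card_Yset[OF assms(1)] Yset_nonempty[OF assms(1)] by simp_all
  have "0 \<le> ?G y" if "y \<in> ?Y" for y
    using ln_ge_1[OF Yset_ge_exp_1[OF assms(1) that]] Log2_pos[of x] by (simp add: prod_nonneg)
  obtain y0 where "y0 \<in> ?Y" using \<open>?Y \<noteq> {}\<close> by blast
  then have "0 \<le> Max (?h ` ?Y)"
    using \<open>finite ?Y\<close> by (intro order_trans[OF _ Max_ge[of _ "?h y0"]]) (auto intro!: divide_nonneg_pos Log_pos)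
  then have "?I * Max (?h ` ?Y) \<le> Max (?h ` ?Y)" by simp
  also have "\<dots> \<le> (\<Sum>y\<in>?Y. ?G y)"
    using \<open>finite ?Y\<close> \<open>?Y \<noteq> {}\<close> \<open>\<And>y. y \<in> ?Y \<Longrightarrow> 0 \<le> ?G y\<close>
      integrand_le_rankin_weight[OF assms(2) Yset_ge_exp_1[OF assms(1)]]
    by (intro Max_image_le_sum) simp_all
  finally show ?thesis .
qed

lemma expectation_Max_Yset_le:
  assumes "1 < \<alpha> * Log2 x - sqrt (Log2 x)"
  shows "(\<integral>w. (if omega (n_below w x) = r then 1 else 0) *
             Max ((\<lambda>y. real (tau (n_below w y)) / Log y * (if \<not> E_event x y w then 1 else 0)) ` Yset x \<alpha>)
           \<partial>rand_model) \<le> (2 / ln 2 + 1) * rankin_const / Log2 x ^ 9"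
    (is "integral\<^sup>L rand_model ?F \<le> _")
proof -
  define L where "L = Log2 x"
  define G where "G y w = (\<Prod>p\<in>primes_below y. rankin_factor (1 / ln y) p (w p)) / (L ^ 10 * ln y)" for y w
  have "L \<ge> 1" by (simp add: L_def)
  have G_nonneg: "0 \<le> G y w" if "y \<in> Yset x \<alpha>" for y w
    using ln_ge_1[OF Yset_ge_exp_1[OF assms that]] \<open>L \<ge> 1\<close> by (simp add: G_def prod_nonneg)
  have "AE w in rand_model. ?F w \<le> (\<Sum>y\<in>Yset x \<alpha>. G y w)"
    using AE_rand_model_values
    by eventually_elim (simp only: G_def L_def Max_integrand_le_sum_rankin_weights[OF assms])
  then have "(\<integral>\<^sup>+w. ennreal (?F w) \<partial>rand_model) \<le> (\<integral>\<^sup>+w. ennreal (\<Sum>y\<in>Yset x \<alpha>. G y w) \<partial>rand_model)"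
    by (intro nn_integral_mono_AE) (auto elim!: eventually_mono intro: ennreal_leI)
  also have "\<dots> = (\<integral>\<^sup>+w. (\<Sum>y\<in>Yset x \<alpha>. ennreal (G y w)) \<partial>rand_model)"
    using G_nonneg by (intro nn_integral_cong) (simp add: sum_ennreal)
  also have "\<dots> = (\<Sum>y\<in>Yset x \<alpha>. \<integral>\<^sup>+w. ennreal (G y w) \<partial>rand_model)"
    unfolding G_def
    by (intro nn_integral_sum measurable_compose[OF _ measurable_ennreal] borel_measurable_divide
        borel_measurable_rand_model_prod) simp
  also have "\<dots> \<le> (\<Sum>y\<in>Yset x \<alpha>. ennreal (rankin_const / L ^ 10))"
    unfolding G_def using \<open>L \<ge> 1\<close> Yset_ge_exp_1[OF assms]
    by (intro sum_mono nn_integral_rankin_weight_le) auto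
  also have "\<dots> = ennreal (real (card (Yset x \<alpha>)) * (rankin_const / L ^ 10))"
    using rankin_const_pos \<open>L \<ge> 1\<close> by (subst ennreal_mult) (auto simp: ennreal_of_nat_eq_real_of_nat)
  also have "\<dots> \<le> ennreal ((2 / ln 2 + 1) * L * (rankin_const / L ^ 10))"
    using card_Yset_le_Log2[OF assms] rankin_const_pos \<open>L \<ge> 1\<close>
    by (intro ennreal_leI mult_right_mono) (auto simp: L_def)
  also have "(2 / ln 2 + 1) * L * (rankin_const / L ^ 10) = (2 / ln 2 + 1) * rankin_const / L ^ 9"
    using \<open>L \<ge> 1\<close> by (simp add: eval_nat_numeral field_simps)
  finally have "(\<integral>\<^sup>+w. ennreal (?F w) \<partial>rand_model) \<le> ennreal ((2 / ln 2 + 1) * rankin_const / L ^ 9)" .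
  moreover have "0 \<le> (2 / ln 2 + 1) * rankin_const / L ^ 9" using rankin_const_pos \<open>L \<ge> 1\<close> by simp
  ultimately show ?thesis unfolding L_def by (intro integral_real_bounded)
qed

lemma Log2_ge_if_ge_exp_exp:
  assumes "exp (exp M) \<le> x"
  shows "M \<le> Log2 x"
proof -
  have "0 < x" using assms exp_gt_zero[of "exp M"] by linarith
  then have "exp M \<le> ln x" using assms by (simp add: ln_ge_iff)
  then have "exp M \<le> Log x" by (simp add: Log_def)
  then have "M \<le> ln (Log x)" using Log_pos[of x] by (simp add: ln_ge_iff)
  then show ?thesis by (simp add: Log2_def Log_def)
qed

lemma one_less_mult_sub_sqrt:
  fixes \<epsilon> \<alpha> L :: real
  assumes "0 < \<epsilon>" "\<epsilon> \<le> \<alpha>" "4 \<le> L" "4 / \<epsilon>\<^sup>2 \<le> L"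
  shows "1 < \<alpha> * L - sqrt L"
proof -
  have "2 / \<epsilon> \<le> sqrt L"
    using real_sqrt_le_mono[OF assms(4)] assms(1) by (simp add: real_sqrt_divide)
  then have "2 * sqrt L \<le> \<epsilon> * sqrt L * sqrt L"
    using assms(1,3) by (intro mult_right_mono) (auto simp: field_simps)
  also have "\<dots> = \<epsilon> * L" using assms(3) by (simp add: mult.assoc)
  also have "\<dots> \<le> \<alpha> * L" using assms(2,3) by (intro mult_right_mono) auto
  finally have "sqrt L \<le> \<alpha> * L - sqrt L" by simp
  moreover have "2 \<le> sqrt L" using real_sqrt_le_mono[OF assms(3)] by simp
  ultimately show ?thesis by linarith
qed

theorem proposition3p2:
  fixes \<epsilon> :: real
  assumes "\<epsilon> > 0"
  shows "\<exists>C X0. \<forall>x \<ge> X0. \<forall>r :: nat.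
           (1 + \<epsilon>) * Log2 x \<le> real r \<and> real r \<le> (2 - \<epsilon>) * Log2 x \<longrightarrow>
           (let \<alpha> = real r / Log2 x - 1 in
            (\<integral>w. (if omega (n_below w x) = r then 1 else 0) *
                   Max ((\<lambda>y. real (tau (n_below w y)) / Log y *
                              (if \<not> E_event x y w then 1 else 0)) ` Yset x \<alpha>)
             \<partial>rand_model)
            \<le> C / (Log2 x) ^ 9)"
proof (intro exI allI impI)
  fix x :: real and r :: nat
  assume x: "exp (exp (max 4 (4 / \<epsilon>\<^sup>2))) \<le> x"
    and r: "(1 + \<epsilon>) * Log2 x \<le> real r \<and> real r \<le> (2 - \<epsilon>) * Log2 x"
  define \<alpha> where "\<alpha> = real r / Log2 x - 1"
  have "1 + \<epsilon> \<le> real r / Log2 x" using r Log2_pos[of x] by (simp add: pos_le_divide_eq)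
  then have "\<epsilon> \<le> \<alpha>" by (simp add: \<alpha>_def)
  moreover have "4 \<le> Log2 x" "4 / \<epsilon>\<^sup>2 \<le> Log2 x" using Log2_ge_if_ge_exp_exp[OF x] by simp_all
  ultimately have "1 < \<alpha> * Log2 x - sqrt (Log2 x)" using assms by (intro one_less_mult_sub_sqrt)
  then show "let \<alpha> = real r / Log2 x - 1 in
      (\<integral>w. (if omega (n_below w x) = r then 1 else 0) *
             Max ((\<lambda>y. real (tau (n_below w y)) / Log y * (if \<not> E_event x y w then 1 else 0)) ` Yset x \<alpha>)
       \<partial>rand_model) \<le> (2 / ln 2 + 1) * rankin_const / (Log2 x) ^ 9"
    unfolding Let_def \<alpha>_def[symmetric] by (rule expectation_Max_Yset_le)
qed

end
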